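(* Let $H$ be a group and $A$ an abelian group. Associating to a central extension $1 \to A \to G \to H \to 1$ its extension cocycle class in $\mathrm{H}^2(H, A)$ yields a bijection between (i) isomorphism classes of groups $G$ with $\mathcal{Z}(G) \cong A$ and $G/\mathcal{Z}(G) \cong H$, and (ii) $\mathrm{Aut}(H) \times \mathrm{Aut}(A)$-orbits of classes of centrally non-degenerate cocycles in $\mathrm{H}^2(H, A)$.
   Context: Given a central extension $1\to A\to G\to H\to 1$ and a section $s: H \to G$, the extension cocycle is $\sigma(h_1,h_2) = s(h_1h_2)^{-1}s(h_1)s(h_2) \in A$; its class in $\mathrm{H}^2(H,A)$ (trivial action) is independent of $s$. The group $\mathrm{Aut}(H)\times\mathrm{Aut}(A)$ acts on $\mathrm{H}^2(H,A)$ via $\rho \mapsto \psi_A \circ \rho \circ (\psi_H \times \psi_H)$ for $\psi_H\in\mathrm{Aut}(H)$, $\psi_A\in\mathrm{Aut}(A)$, $\rho \in \mathrm{Z}^2(H,A)$. A 2-cocycle $\sigma \in \mathrm{Z}^2(H,A)$ is called centrally non-degenerate if for every non-trivial $g \in \mathcal{Z}(H)$ there is $h \in H$ with $\sigma(g,h) \neq \sigma(h,g)$. *)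

theory Defs
  imports "HOL-Algebra.Algebra"
begin

definition group_center :: "('a, 'm) monoid_scheme \<Rightarrow> 'a set" where
  "group_center G = {z \<in> carrier G. \<forall>g \<in> carrier G. z \<otimes>\<^bsub>G\<^esub> g = g \<otimes>\<^bsub>G\<^esub> z}"

text \<open>Z^2(H,A) for the trivial action: functions H x H -> A with
  s(h1,h2) s(h1 h2, h3) = s(h2,h3) s(h1, h2 h3).  Only values on the carrier matter.\<close>
definition cocycle2 :: "('h, 'm) monoid_scheme \<Rightarrow> ('a, 'n) monoid_scheme \<Rightarrow> ('h \<Rightarrow> 'h \<Rightarrow> 'a) \<Rightarrow> bool" where
  "cocycle2 H A \<sigma> \<longleftrightarrow>
     (\<forall>h1 \<in> carrier H. \<forall>h2 \<in> carrier H. \<sigma> h1 h2 \<in> carrier A) \<and>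
     (\<forall>h1 \<in> carrier H. \<forall>h2 \<in> carrier H. \<forall>h3 \<in> carrier H.
        \<sigma> h1 h2 \<otimes>\<^bsub>A\<^esub> \<sigma> (h1 \<otimes>\<^bsub>H\<^esub> h2) h3 = \<sigma> h2 h3 \<otimes>\<^bsub>A\<^esub> \<sigma> h1 (h2 \<otimes>\<^bsub>H\<^esub> h3))"

text \<open>Two cocycles define the same class in H^2(H,A) iff they differ by a coboundary
  (h1,h2) |-> f(h1 h2)^{-1} f(h1) f(h2).\<close>
definition cohomologous :: "('h, 'm) monoid_scheme \<Rightarrow> ('a, 'n) monoid_scheme \<Rightarrow> ('h \<Rightarrow> 'h \<Rightarrow> 'a) \<Rightarrow> ('h \<Rightarrow> 'h \<Rightarrow> 'a) \<Rightarrow> bool" where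
  "cohomologous H A \<sigma> \<rho> \<longleftrightarrow>
     (\<exists>f. f \<in> carrier H \<rightarrow> carrier A \<and>
        (\<forall>h1 \<in> carrier H. \<forall>h2 \<in> carrier H.
           \<rho> h1 h2 = \<sigma> h1 h2 \<otimes>\<^bsub>A\<^esub> inv\<^bsub>A\<^esub> (f (h1 \<otimes>\<^bsub>H\<^esub> h2)) \<otimes>\<^bsub>A\<^esub> f h1 \<otimes>\<^bsub>A\<^esub> f h2))"

definition coh_class :: "('h, 'm) monoid_scheme \<Rightarrow> ('a, 'n) monoid_scheme \<Rightarrow> ('h \<Rightarrow> 'h \<Rightarrow> 'a) \<Rightarrow> ('h \<Rightarrow> 'h \<Rightarrow> 'a) set" where
  "coh_class H A \<sigma> = {\<rho>. cocycle2 H A \<rho> \<and> cohomologous H A \<sigma> \<rho>}"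

definition aut_act :: "('h \<Rightarrow> 'h) \<Rightarrow> ('a \<Rightarrow> 'a) \<Rightarrow> ('h \<Rightarrow> 'h \<Rightarrow> 'a) \<Rightarrow> ('h \<Rightarrow> 'h \<Rightarrow> 'a)" where
  "aut_act \<psi>H \<psi>A \<rho> = (\<lambda>h1 h2. \<psi>A (\<rho> (\<psi>H h1) (\<psi>H h2)))"

definition same_orbit :: "('h, 'm) monoid_scheme \<Rightarrow> ('a, 'n) monoid_scheme \<Rightarrow> ('h \<Rightarrow> 'h \<Rightarrow> 'a) \<Rightarrow> ('h \<Rightarrow> 'h \<Rightarrow> 'a) \<Rightarrow> bool" where
  "same_orbit H A \<sigma> \<rho> \<longleftrightarrow>
     (\<exists>\<psi>H \<in> iso H H. \<exists>\<psi>A \<in> iso A A. coh_class H A (aut_act \<psi>H \<psi>A \<sigma>) = coh_class H A \<rho>)"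

definition centrally_nondegenerate :: "('h, 'm) monoid_scheme \<Rightarrow> ('h \<Rightarrow> 'h \<Rightarrow> 'a) \<Rightarrow> bool" where
  "centrally_nondegenerate H \<sigma> \<longleftrightarrow>
     (\<forall>g \<in> group_center H. g \<noteq> \<one>\<^bsub>H\<^esub> \<longrightarrow> (\<exists>h \<in> carrier H. \<sigma> g h \<noteq> \<sigma> h g))"

text \<open>1 -> A -(iota)-> G -(pi)-> H -> 1 is a central extension whose kernel iota(A) is exactly Z(G)
  (so iota: A ~ Z(G) and pi induces G/Z(G) ~ H).\<close>
definition center_extension ::
  "('g, 'p) monoid_scheme \<Rightarrow> ('a, 'n) monoid_scheme \<Rightarrow> ('h, 'm) monoid_scheme \<Rightarrow> ('a \<Rightarrow> 'g) \<Rightarrow> ('g \<Rightarrow> 'h) \<Rightarrow> bool" where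
  "center_extension G A H \<iota> \<pi> \<longleftrightarrow>
     \<iota> \<in> hom A G \<and> inj_on \<iota> (carrier A) \<and> \<iota> ` carrier A = group_center G \<and>
     \<pi> \<in> hom G H \<and> \<pi> ` carrier G = carrier H \<and> kernel G H \<pi> = \<iota> ` carrier A"

definition extension_cocycle ::
  "('g, 'p) monoid_scheme \<Rightarrow> ('a, 'n) monoid_scheme \<Rightarrow> ('h, 'm) monoid_scheme \<Rightarrow> ('a \<Rightarrow> 'g) \<Rightarrow> ('g \<Rightarrow> 'h)
     \<Rightarrow> ('h \<Rightarrow> 'g) \<Rightarrow> ('h \<Rightarrow> 'h \<Rightarrow> 'a) \<Rightarrow> bool" where
  "extension_cocycle G A H \<iota> \<pi> s \<sigma> \<longleftrightarrow>
     (\<forall>h \<in> carrier H. s h \<in> carrier G \<and> \<pi> (s h) = h) \<and>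
     (\<forall>h1 \<in> carrier H. \<forall>h2 \<in> carrier H. \<sigma> h1 h2 \<in> carrier A \<and>
        \<iota> (\<sigma> h1 h2) = inv\<^bsub>G\<^esub> (s (h1 \<otimes>\<^bsub>H\<^esub> h2)) \<otimes>\<^bsub>G\<^esub> s h1 \<otimes>\<^bsub>G\<^esub> s h2)"

definition assoc_cocycle ::
  "('g, 'p) monoid_scheme \<Rightarrow> ('a, 'n) monoid_scheme \<Rightarrow> ('h, 'm) monoid_scheme \<Rightarrow> ('h \<Rightarrow> 'h \<Rightarrow> 'a) \<Rightarrow> bool" where
  "assoc_cocycle G A H \<sigma> \<longleftrightarrow>
     (\<exists>\<iota> \<pi> s. center_extension G A H \<iota> \<pi> \<and> extension_cocycle G A H \<iota> \<pi> s \<sigma>)"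

end

theory Submission
  imports Defs
begin

text \<open>A group \<open>G\<close> with centre \<open>A\<close> and central quotient \<open>H\<close> is isomorphic to the twisted
  product \<open>H \<times>\<^sub>\<sigma> A\<close> of any of its extension cocycles \<open>\<sigma>\<close>, with multiplication
  \<open>(h\<^sub>1, a\<^sub>1) (h\<^sub>2, a\<^sub>2) = (h\<^sub>1 h\<^sub>2, \<sigma>(h\<^sub>1, h\<^sub>2) a\<^sub>1 a\<^sub>2)\<close>. Cohomologous cocycles, and cocycles
  related by \<open>Aut(H) \<times> Aut(A)\<close>, give isomorphic twisted products. Conversely, an isomorphism
  \<open>G' \<cong> G\<close> maps \<open>Z(G')\<close> onto \<open>Z(G)\<close>, so it induces automorphisms of \<open>A\<close> and of
  \<open>H = G/Z(G)\<close>; comparing the images of the two sections shows that the cocycles become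
  cohomologous after applying these automorphisms. Finally, for any cocycle \<open>\<rho>\<close> the centre of
  \<open>H \<times>\<^sub>\<rho> A\<close> is \<open>{1} \<times> A\<close> exactly when \<open>\<rho>\<close> is centrally non-degenerate, which gives
  surjectivity.\<close>

lemma group_center_subset: "group_center G \<subseteq> carrier G"
  by (auto simp: group_center_def)

lemma (in group) group_center_subgroup: "subgroup (group_center G) G"
proof (rule subgroupI)
  show "group_center G \<subseteq> carrier G" by (rule group_center_subset)
  show "group_center G \<noteq> {}" by (auto simp: group_center_def intro!: exI[of _ \<one>])
next
  fix a assume "a \<in> group_center G"
  then have a: "a \<in> carrier G" and ca: "\<And>g. g \<in> carrier G \<Longrightarrow> a \<otimes> g = g \<otimes> a"
    by (auto simp: group_center_def)
  have "inv a \<otimes> g = g \<otimes> inv a" if g: "g \<in> carrier G" for g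
  proof -
    have "a \<otimes> (g \<otimes> inv a) = g \<otimes> a \<otimes> inv a"
      using a g by (simp add: ca flip: m_assoc)
    with a g show ?thesis by (simp add: inv_solve_left' m_assoc)
  qed
  with a show "inv a \<in> group_center G" by (simp add: group_center_def)
next
  fix a b assume "a \<in> group_center G" "b \<in> group_center G"
  then have ab: "a \<in> carrier G" "b \<in> carrier G"
    and ca: "\<And>g. g \<in> carrier G \<Longrightarrow> a \<otimes> g = g \<otimes> a"
    and cb: "\<And>g. g \<in> carrier G \<Longrightarrow> b \<otimes> g = g \<otimes> b"
    by (auto simp: group_center_def)
  have "a \<otimes> b \<otimes> g = g \<otimes> (a \<otimes> b)" if g: "g \<in> carrier G" for g
  proof -
    have "a \<otimes> b \<otimes> g = a \<otimes> (g \<otimes> b)" using ab g by (simp add: m_assoc cb)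
    also have "\<dots> = g \<otimes> (a \<otimes> b)" using ab g by (simp add: ca[OF g] flip: m_assoc)
    finally show ?thesis .
  qed
  with ab show "a \<otimes> b \<in> group_center G" by (simp add: group_center_def)
qed

lemma (in group) group_center_normal: "group_center G \<lhd> G"
proof -
  have "x \<otimes> z \<otimes> inv x = z" if "x \<in> carrier G" "z \<in> group_center G" for x z
  proof -
    have "z \<in> carrier G" "x \<otimes> z = z \<otimes> x" using that by (auto simp: group_center_def)
    with that(1) show ?thesis by (simp add: m_assoc)
  qed
  then show ?thesis by (simp add: normal_inv_iff group_center_subgroup)
qed

lemma surj_hom_image_group_center_subset:
  assumes hom: "\<phi> \<in> hom G G'" and onto: "\<phi> ` carrier G = carrier G'"
  shows "\<phi> ` group_center G \<subseteq> group_center G'"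
proof
  fix y assume "y \<in> \<phi> ` group_center G"
  then obtain z where z: "z \<in> group_center G" and y: "y = \<phi> z" by blast
  have zc: "z \<in> carrier G" using z by (simp add: group_center_def)
  have "\<phi> z \<otimes>\<^bsub>G'\<^esub> g = g \<otimes>\<^bsub>G'\<^esub> \<phi> z" if g: "g \<in> carrier G'" for g
  proof -
    obtain x where "x \<in> carrier G" "g = \<phi> x" using g unfolding onto[symmetric] by blast
    with z zc show ?thesis by (simp add: group_center_def flip: hom_mult[OF hom])
  qed
  then show "y \<in> group_center G'"
    using zc hom y by (simp add: group_center_def hom_in_carrier)
qed

lemma iso_image_group_center:
  assumes "group G" and \<phi>: "\<phi> \<in> iso G G'"
  shows "\<phi> ` group_center G = group_center G'"
proof
  show "\<phi> ` group_center G \<subseteq> group_center G'"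
    using \<phi> by (simp add: iso_iff surj_hom_image_group_center_subset)
  show "group_center G' \<subseteq> \<phi> ` group_center G"
  proof
    fix y assume y: "y \<in> group_center G'"
    let ?\<phi>' = "inv_into (carrier G) \<phi>"
    have "?\<phi>' \<in> iso G' G" using group.iso_set_sym[OF assms] .
    then have "?\<phi>' y \<in> group_center G"
      using y by (auto simp: iso_iff dest: surj_hom_image_group_center_subset)
    moreover have "y \<in> \<phi> ` carrier G"
      using y \<phi> group_center_subset[of G'] by (auto simp: iso_iff)
    ultimately show "y \<in> \<phi> ` group_center G"
      by (metis f_inv_into_f image_eqI)
  qed
qed

lemma iso_group_center_iff:
  assumes "group G" and "\<phi> \<in> iso G G'" and "x \<in> carrier G"
  shows "\<phi> x \<in> group_center G' \<longleftrightarrow> x \<in> group_center G"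
proof -
  have "inj_on \<phi> (carrier G)" using assms(2) by (simp add: iso_iff)
  then show ?thesis
    using iso_image_group_center[OF assms(1,2)] group_center_subset[of G] assms(3)
    by (simp flip: inj_on_image_mem_iff)
qed

section \<open>Cocycles with trivial coefficients\<close>

locale trivial_action_cohomology = H: group H + A: comm_group A
  for H :: "('h, 'm) monoid_scheme" and A :: "('a, 'n) monoid_scheme"
begin

lemma cocycle2_closed:
  "cocycle2 H A \<sigma> \<Longrightarrow> h1 \<in> carrier H \<Longrightarrow> h2 \<in> carrier H \<Longrightarrow> \<sigma> h1 h2 \<in> carrier A"
  by (simp add: cocycle2_def)

lemma cocycle2_eq:
  "cocycle2 H A \<sigma> \<Longrightarrow> h1 \<in> carrier H \<Longrightarrow> h2 \<in> carrier H \<Longrightarrow> h3 \<in> carrier H \<Longrightarrow>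
   \<sigma> h1 h2 \<otimes>\<^bsub>A\<^esub> \<sigma> (h1 \<otimes>\<^bsub>H\<^esub> h2) h3 = \<sigma> h2 h3 \<otimes>\<^bsub>A\<^esub> \<sigma> h1 (h2 \<otimes>\<^bsub>H\<^esub> h3)"
  by (simp add: cocycle2_def)

lemma cocycle2_one_left:
  assumes "cocycle2 H A \<sigma>" and "h \<in> carrier H"
  shows "\<sigma> \<one>\<^bsub>H\<^esub> h = \<sigma> \<one>\<^bsub>H\<^esub> \<one>\<^bsub>H\<^esub>"
proof -
  have "\<sigma> \<one>\<^bsub>H\<^esub> \<one>\<^bsub>H\<^esub> \<otimes>\<^bsub>A\<^esub> \<sigma> \<one>\<^bsub>H\<^esub> h = \<sigma> \<one>\<^bsub>H\<^esub> h \<otimes>\<^bsub>A\<^esub> \<sigma> \<one>\<^bsub>H\<^esub> h"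
    using cocycle2_eq[OF assms(1) H.one_closed H.one_closed assms(2)] assms(2) by simp
  then show ?thesis
    using assms by (simp add: A.r_cancel cocycle2_closed)
qed

lemma cocycle2_one_right:
  assumes "cocycle2 H A \<sigma>" and "h \<in> carrier H"
  shows "\<sigma> h \<one>\<^bsub>H\<^esub> = \<sigma> \<one>\<^bsub>H\<^esub> \<one>\<^bsub>H\<^esub>"
proof -
  have "\<sigma> h \<one>\<^bsub>H\<^esub> \<otimes>\<^bsub>A\<^esub> \<sigma> h \<one>\<^bsub>H\<^esub> = \<sigma> \<one>\<^bsub>H\<^esub> \<one>\<^bsub>H\<^esub> \<otimes>\<^bsub>A\<^esub> \<sigma> h \<one>\<^bsub>H\<^esub>"
    using cocycle2_eq[OF assms(1) assms(2) H.one_closed H.one_closed] assms(2) by simp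
  then show ?thesis
    using assms by (simp add: A.r_cancel cocycle2_closed)
qed

lemma cocycle2_aut_act:
  assumes \<sigma>: "cocycle2 H A \<sigma>" and "\<psi>H \<in> hom H H" and "\<psi>A \<in> hom A A"
  shows "cocycle2 H A (aut_act \<psi>H \<psi>A \<sigma>)"
  unfolding cocycle2_def aut_act_def
proof (intro conjI ballI)
  fix h1 h2 assume "h1 \<in> carrier H" "h2 \<in> carrier H"
  then show "\<psi>A (\<sigma> (\<psi>H h1) (\<psi>H h2)) \<in> carrier A"
    using assms by (simp add: hom_in_carrier cocycle2_closed)
next
  fix h1 h2 h3 assume h: "h1 \<in> carrier H" "h2 \<in> carrier H" "h3 \<in> carrier H"
  then have \<psi>h: "\<psi>H h1 \<in> carrier H" "\<psi>H h2 \<in> carrier H" "\<psi>H h3 \<in> carrier H"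
    using assms(2) by (auto simp: hom_in_carrier)
  have "\<psi>H (h1 \<otimes>\<^bsub>H\<^esub> h2) = \<psi>H h1 \<otimes>\<^bsub>H\<^esub> \<psi>H h2" "\<psi>H (h2 \<otimes>\<^bsub>H\<^esub> h3) = \<psi>H h2 \<otimes>\<^bsub>H\<^esub> \<psi>H h3"
    using h assms(2) by (simp_all add: hom_mult)
  with \<psi>h \<sigma> show "\<psi>A (\<sigma> (\<psi>H h1) (\<psi>H h2)) \<otimes>\<^bsub>A\<^esub> \<psi>A (\<sigma> (\<psi>H (h1 \<otimes>\<^bsub>H\<^esub> h2)) (\<psi>H h3)) =
      \<psi>A (\<sigma> (\<psi>H h2) (\<psi>H h3)) \<otimes>\<^bsub>A\<^esub> \<psi>A (\<sigma> (\<psi>H h1) (\<psi>H (h2 \<otimes>\<^bsub>H\<^esub> h3)))"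
    by (simp add: cocycle2_closed cocycle2_eq flip: hom_mult[OF assms(3)])
qed

lemma cohomologousE:
  assumes "cohomologous H A \<sigma> \<rho>"
  obtains f where "f \<in> carrier H \<rightarrow> carrier A"
    "\<And>h1 h2. h1 \<in> carrier H \<Longrightarrow> h2 \<in> carrier H \<Longrightarrow>
       \<rho> h1 h2 = \<sigma> h1 h2 \<otimes>\<^bsub>A\<^esub> inv\<^bsub>A\<^esub> f (h1 \<otimes>\<^bsub>H\<^esub> h2) \<otimes>\<^bsub>A\<^esub> f h1 \<otimes>\<^bsub>A\<^esub> f h2"
  using assms unfolding cohomologous_def by blast

lemma cohomologous_refl: "cocycle2 H A \<sigma> \<Longrightarrow> cohomologous H A \<sigma> \<sigma>"
  unfolding cohomologous_def by (intro exI[of _ "\<lambda>_. \<one>\<^bsub>A\<^esub>"]) (auto simp: cocycle2_closed)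

lemma cohomologous_sym:
  assumes \<sigma>: "cocycle2 H A \<sigma>" and "cohomologous H A \<sigma> \<rho>"
  shows "cohomologous H A \<rho> \<sigma>"
proof -
  obtain f where f: "f \<in> carrier H \<rightarrow> carrier A"
    "\<And>h1 h2. h1 \<in> carrier H \<Longrightarrow> h2 \<in> carrier H \<Longrightarrow>
       \<rho> h1 h2 = \<sigma> h1 h2 \<otimes>\<^bsub>A\<^esub> inv\<^bsub>A\<^esub> f (h1 \<otimes>\<^bsub>H\<^esub> h2) \<otimes>\<^bsub>A\<^esub> f h1 \<otimes>\<^bsub>A\<^esub> f h2"
    using assms(2) by (rule cohomologousE) blast
  show ?thesis unfolding cohomologous_def
  proof (intro exI[of _ "\<lambda>h. inv\<^bsub>A\<^esub> f h"] conjI ballI)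
    show "(\<lambda>h. inv\<^bsub>A\<^esub> f h) \<in> carrier H \<rightarrow> carrier A" using f(1) by auto
    fix h1 h2 assume h: "h1 \<in> carrier H" "h2 \<in> carrier H"
    then have c: "\<sigma> h1 h2 \<in> carrier A" "f h1 \<in> carrier A" "f h2 \<in> carrier A" "f (h1 \<otimes>\<^bsub>H\<^esub> h2) \<in> carrier A"
      using \<sigma> f(1) by (auto simp: cocycle2_closed)
    have "\<rho> h1 h2 \<otimes>\<^bsub>A\<^esub> inv\<^bsub>A\<^esub> (inv\<^bsub>A\<^esub> f (h1 \<otimes>\<^bsub>H\<^esub> h2)) \<otimes>\<^bsub>A\<^esub> inv\<^bsub>A\<^esub> f h1 \<otimes>\<^bsub>A\<^esub> inv\<^bsub>A\<^esub> f h2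
      = \<sigma> h1 h2 \<otimes>\<^bsub>A\<^esub> (inv\<^bsub>A\<^esub> f (h1 \<otimes>\<^bsub>H\<^esub> h2) \<otimes>\<^bsub>A\<^esub> f (h1 \<otimes>\<^bsub>H\<^esub> h2))
          \<otimes>\<^bsub>A\<^esub> (f h1 \<otimes>\<^bsub>A\<^esub> inv\<^bsub>A\<^esub> f h1) \<otimes>\<^bsub>A\<^esub> (f h2 \<otimes>\<^bsub>A\<^esub> inv\<^bsub>A\<^esub> f h2)"
      using c by (simp only: f(2)[OF h] A.inv_inv A.m_ac A.inv_closed A.m_closed)
    then show "\<sigma> h1 h2 = \<rho> h1 h2 \<otimes>\<^bsub>A\<^esub> inv\<^bsub>A\<^esub> (inv\<^bsub>A\<^esub> f (h1 \<otimes>\<^bsub>H\<^esub> h2))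
        \<otimes>\<^bsub>A\<^esub> inv\<^bsub>A\<^esub> f h1 \<otimes>\<^bsub>A\<^esub> inv\<^bsub>A\<^esub> f h2"
      using c by simp
  qed
qed

lemma cohomologous_trans:
  assumes \<sigma>: "cocycle2 H A \<sigma>" and "cohomologous H A \<sigma> \<rho>" and "cohomologous H A \<rho> \<tau>"
  shows "cohomologous H A \<sigma> \<tau>"
proof -
  obtain f where f: "f \<in> carrier H \<rightarrow> carrier A"
    "\<And>h1 h2. h1 \<in> carrier H \<Longrightarrow> h2 \<in> carrier H \<Longrightarrow>
       \<rho> h1 h2 = \<sigma> h1 h2 \<otimes>\<^bsub>A\<^esub> inv\<^bsub>A\<^esub> f (h1 \<otimes>\<^bsub>H\<^esub> h2) \<otimes>\<^bsub>A\<^esub> f h1 \<otimes>\<^bsub>A\<^esub> f h2"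
    using assms(2) by (rule cohomologousE) blast
  obtain g where g: "g \<in> carrier H \<rightarrow> carrier A"
    "\<And>h1 h2. h1 \<in> carrier H \<Longrightarrow> h2 \<in> carrier H \<Longrightarrow>
       \<tau> h1 h2 = \<rho> h1 h2 \<otimes>\<^bsub>A\<^esub> inv\<^bsub>A\<^esub> g (h1 \<otimes>\<^bsub>H\<^esub> h2) \<otimes>\<^bsub>A\<^esub> g h1 \<otimes>\<^bsub>A\<^esub> g h2"
    using assms(3) by (rule cohomologousE) blast
  show ?thesis unfolding cohomologous_def
  proof (intro exI[of _ "\<lambda>h. f h \<otimes>\<^bsub>A\<^esub> g h"] conjI ballI)
    show "(\<lambda>h. f h \<otimes>\<^bsub>A\<^esub> g h) \<in> carrier H \<rightarrow> carrier A" using f(1) g(1) by auto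
    fix h1 h2 assume h: "h1 \<in> carrier H" "h2 \<in> carrier H"
    then have "\<sigma> h1 h2 \<in> carrier A" "f h1 \<in> carrier A" "f h2 \<in> carrier A" "f (h1 \<otimes>\<^bsub>H\<^esub> h2) \<in> carrier A"
      "g h1 \<in> carrier A" "g h2 \<in> carrier A" "g (h1 \<otimes>\<^bsub>H\<^esub> h2) \<in> carrier A"
      using \<sigma> f(1) g(1) by (auto simp: cocycle2_closed)
    then show "\<tau> h1 h2 = \<sigma> h1 h2 \<otimes>\<^bsub>A\<^esub> inv\<^bsub>A\<^esub> (f (h1 \<otimes>\<^bsub>H\<^esub> h2) \<otimes>\<^bsub>A\<^esub> g (h1 \<otimes>\<^bsub>H\<^esub> h2))
        \<otimes>\<^bsub>A\<^esub> (f h1 \<otimes>\<^bsub>A\<^esub> g h1) \<otimes>\<^bsub>A\<^esub> (f h2 \<otimes>\<^bsub>A\<^esub> g h2)"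
      by (simp add: g(2)[OF h] f(2)[OF h] A.inv_mult A.m_ac)
  qed
qed

lemma coh_class_eq:
  assumes "cocycle2 H A \<sigma>" "cocycle2 H A \<rho>" "cohomologous H A \<sigma> \<rho>"
  shows "coh_class H A \<sigma> = coh_class H A \<rho>"
  unfolding coh_class_def using assms cohomologous_trans cohomologous_sym by blast

end

lemma same_orbit_refl: "same_orbit H A \<sigma> \<sigma>"
  unfolding same_orbit_def by (intro bexI[of _ "\<lambda>x. x"] iso_set_refl) (simp add: aut_act_def)

section \<open>Twisted products\<close>

text \<open>No normalisation \<open>\<sigma>(1, h) = 1\<close> is assumed, so the identity is \<open>(1, \<sigma>(1, 1)\<inverse>)\<close> and
  \<open>A\<close> embeds as \<open>a \<mapsto> (1, a \<sigma>(1, 1)\<inverse>)\<close>.\<close>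

definition twisted_product ::
  "('h, 'm) monoid_scheme \<Rightarrow> ('a, 'n) monoid_scheme \<Rightarrow> ('h \<Rightarrow> 'h \<Rightarrow> 'a) \<Rightarrow> ('h \<times> 'a) monoid" where
  "twisted_product H A \<sigma> =
     \<lparr>carrier = carrier H \<times> carrier A,
      monoid.mult = (\<lambda>(h1, a1) (h2, a2). (h1 \<otimes>\<^bsub>H\<^esub> h2, \<sigma> h1 h2 \<otimes>\<^bsub>A\<^esub> a1 \<otimes>\<^bsub>A\<^esub> a2)),
      one = (\<one>\<^bsub>H\<^esub>, inv\<^bsub>A\<^esub> \<sigma> \<one>\<^bsub>H\<^esub> \<one>\<^bsub>H\<^esub>)\<rparr>"

definition twisted_product_incl ::
  "('h, 'm) monoid_scheme \<Rightarrow> ('a, 'n) monoid_scheme \<Rightarrow> ('h \<Rightarrow> 'h \<Rightarrow> 'a) \<Rightarrow> 'a \<Rightarrow> 'h \<times> 'a" where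
  "twisted_product_incl H A \<sigma> a = (\<one>\<^bsub>H\<^esub>, a \<otimes>\<^bsub>A\<^esub> inv\<^bsub>A\<^esub> \<sigma> \<one>\<^bsub>H\<^esub> \<one>\<^bsub>H\<^esub>)"

lemma twisted_product_simps [simp]:
  "carrier (twisted_product H A \<sigma>) = carrier H \<times> carrier A"
  "(h1, a1) \<otimes>\<^bsub>twisted_product H A \<sigma>\<^esub> (h2, a2) = (h1 \<otimes>\<^bsub>H\<^esub> h2, \<sigma> h1 h2 \<otimes>\<^bsub>A\<^esub> a1 \<otimes>\<^bsub>A\<^esub> a2)"
  "\<one>\<^bsub>twisted_product H A \<sigma>\<^esub> = (\<one>\<^bsub>H\<^esub>, inv\<^bsub>A\<^esub> \<sigma> \<one>\<^bsub>H\<^esub> \<one>\<^bsub>H\<^esub>)"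
  by (simp_all add: twisted_product_def)

context trivial_action_cohomology
begin

lemma twisted_product_assoc:
  assumes \<sigma>: "cocycle2 H A \<sigma>"
    and h: "h1 \<in> carrier H" "h2 \<in> carrier H" "h3 \<in> carrier H"
    and a: "a1 \<in> carrier A" "a2 \<in> carrier A" "a3 \<in> carrier A"
  shows "(h1, a1) \<otimes>\<^bsub>twisted_product H A \<sigma>\<^esub> (h2, a2) \<otimes>\<^bsub>twisted_product H A \<sigma>\<^esub> (h3, a3)
    = (h1, a1) \<otimes>\<^bsub>twisted_product H A \<sigma>\<^esub> ((h2, a2) \<otimes>\<^bsub>twisted_product H A \<sigma>\<^esub> (h3, a3))"
proof -
  note closed = cocycle2_closed[OF \<sigma>]
  have "\<sigma> (h1 \<otimes>\<^bsub>H\<^esub> h2) h3 \<otimes>\<^bsub>A\<^esub> (\<sigma> h1 h2 \<otimes>\<^bsub>A\<^esub> a1 \<otimes>\<^bsub>A\<^esub> a2) \<otimes>\<^bsub>A\<^esub> a3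
      = (\<sigma> h1 h2 \<otimes>\<^bsub>A\<^esub> \<sigma> (h1 \<otimes>\<^bsub>H\<^esub> h2) h3) \<otimes>\<^bsub>A\<^esub> (a1 \<otimes>\<^bsub>A\<^esub> (a2 \<otimes>\<^bsub>A\<^esub> a3))"
    using h a closed by (simp add: A.m_ac)
  also have "\<dots> = (\<sigma> h2 h3 \<otimes>\<^bsub>A\<^esub> \<sigma> h1 (h2 \<otimes>\<^bsub>H\<^esub> h3)) \<otimes>\<^bsub>A\<^esub> (a1 \<otimes>\<^bsub>A\<^esub> (a2 \<otimes>\<^bsub>A\<^esub> a3))"
    using cocycle2_eq[OF \<sigma> h] by simp
  also have "\<dots> = \<sigma> h1 (h2 \<otimes>\<^bsub>H\<^esub> h3) \<otimes>\<^bsub>A\<^esub> a1 \<otimes>\<^bsub>A\<^esub> (\<sigma> h2 h3 \<otimes>\<^bsub>A\<^esub> a2 \<otimes>\<^bsub>A\<^esub> a3)"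
    using h a closed by (simp add: A.m_ac)
  finally show ?thesis using h by (simp add: H.m_assoc)
qed

lemma group_twisted_product:
  assumes \<sigma>: "cocycle2 H A \<sigma>"
  shows "group (twisted_product H A \<sigma>)"
proof (rule groupI)
  let ?T = "twisted_product H A \<sigma>"
  note closed = cocycle2_closed[OF \<sigma>]
  show "x \<otimes>\<^bsub>?T\<^esub> y \<in> carrier ?T" if "x \<in> carrier ?T" "y \<in> carrier ?T" for x y
    using that closed by auto
  show "\<one>\<^bsub>?T\<^esub> \<in> carrier ?T" using closed by simp
  show "x \<otimes>\<^bsub>?T\<^esub> y \<otimes>\<^bsub>?T\<^esub> z = x \<otimes>\<^bsub>?T\<^esub> (y \<otimes>\<^bsub>?T\<^esub> z)"
    if "x \<in> carrier ?T" "y \<in> carrier ?T" "z \<in> carrier ?T" for x y z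
    using that twisted_product_assoc[OF \<sigma>] by (simp only: twisted_product_simps(1)) auto
  show "\<one>\<^bsub>?T\<^esub> \<otimes>\<^bsub>?T\<^esub> x = x" if x: "x \<in> carrier ?T" for x
  proof -
    obtain h a where "x = (h, a)" "h \<in> carrier H" "a \<in> carrier A" using x by auto
    with closed cocycle2_one_left[OF \<sigma>, of h] show ?thesis by (simp add: A.m_assoc)
  qed
  show "\<exists>y\<in>carrier ?T. y \<otimes>\<^bsub>?T\<^esub> x = \<one>\<^bsub>?T\<^esub>" if x: "x \<in> carrier ?T" for x
  proof -
    obtain h a where x: "x = (h, a)" "h \<in> carrier H" "a \<in> carrier A" using x by auto
    let ?c = "\<sigma> \<one>\<^bsub>H\<^esub> \<one>\<^bsub>H\<^esub>" and ?d = "\<sigma> (inv\<^bsub>H\<^esub> h) h"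
    let ?b = "inv\<^bsub>A\<^esub> ?c \<otimes>\<^bsub>A\<^esub> inv\<^bsub>A\<^esub> a \<otimes>\<^bsub>A\<^esub> inv\<^bsub>A\<^esub> ?d"
    have c: "?c \<in> carrier A" "?d \<in> carrier A" using x closed by auto
    have "?d \<otimes>\<^bsub>A\<^esub> ?b \<otimes>\<^bsub>A\<^esub> a
        = (?d \<otimes>\<^bsub>A\<^esub> inv\<^bsub>A\<^esub> ?d) \<otimes>\<^bsub>A\<^esub> (a \<otimes>\<^bsub>A\<^esub> inv\<^bsub>A\<^esub> a) \<otimes>\<^bsub>A\<^esub> inv\<^bsub>A\<^esub> ?c"
      using c x by (simp only: A.m_ac A.inv_closed A.m_closed)
    then have "(inv\<^bsub>H\<^esub> h, ?b) \<otimes>\<^bsub>?T\<^esub> x = \<one>\<^bsub>?T\<^esub>"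
      using c x by simp
    moreover have "(inv\<^bsub>H\<^esub> h, ?b) \<in> carrier ?T" using c x by simp
    ultimately show ?thesis by blast
  qed
qed

lemma twisted_product_iso_if_cohomologous:
  assumes \<sigma>: "cocycle2 H A \<sigma>" and "cohomologous H A \<sigma> \<rho>"
  shows "twisted_product H A \<sigma> \<cong> twisted_product H A \<rho>"
proof -
  obtain f where f: "f \<in> carrier H \<rightarrow> carrier A"
    and \<rho>: "\<And>h1 h2. h1 \<in> carrier H \<Longrightarrow> h2 \<in> carrier H \<Longrightarrow>
       \<rho> h1 h2 = \<sigma> h1 h2 \<otimes>\<^bsub>A\<^esub> inv\<^bsub>A\<^esub> f (h1 \<otimes>\<^bsub>H\<^esub> h2) \<otimes>\<^bsub>A\<^esub> f h1 \<otimes>\<^bsub>A\<^esub> f h2"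
    using assms(2) by (rule cohomologousE) blast
  have fc: "f h \<in> carrier A" if "h \<in> carrier H" for h using f that by auto
  let ?\<Phi> = "\<lambda>(h, a). (h, a \<otimes>\<^bsub>A\<^esub> inv\<^bsub>A\<^esub> f h)"
  let ?\<Psi> = "\<lambda>(h, b). (h, b \<otimes>\<^bsub>A\<^esub> f h)"
  have "?\<Phi> \<in> hom (twisted_product H A \<sigma>) (twisted_product H A \<rho>)"
  proof (rule homI)
    fix x y assume "x \<in> carrier (twisted_product H A \<sigma>)" "y \<in> carrier (twisted_product H A \<sigma>)"
    then obtain h1 a1 h2 a2 where eq: "x = (h1, a1)" "y = (h2, a2)"
      and h: "h1 \<in> carrier H" "h2 \<in> carrier H" and a: "a1 \<in> carrier A" "a2 \<in> carrier A"
      by auto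
    have c: "\<sigma> h1 h2 \<in> carrier A" "f h1 \<in> carrier A" "f h2 \<in> carrier A" "f (h1 \<otimes>\<^bsub>H\<^esub> h2) \<in> carrier A"
      using h \<sigma> f by (auto simp: cocycle2_closed)
    have "\<rho> h1 h2 \<otimes>\<^bsub>A\<^esub> (a1 \<otimes>\<^bsub>A\<^esub> inv\<^bsub>A\<^esub> f h1) \<otimes>\<^bsub>A\<^esub> (a2 \<otimes>\<^bsub>A\<^esub> inv\<^bsub>A\<^esub> f h2)
       = \<sigma> h1 h2 \<otimes>\<^bsub>A\<^esub> a1 \<otimes>\<^bsub>A\<^esub> a2 \<otimes>\<^bsub>A\<^esub> inv\<^bsub>A\<^esub> f (h1 \<otimes>\<^bsub>H\<^esub> h2)
           \<otimes>\<^bsub>A\<^esub> (f h1 \<otimes>\<^bsub>A\<^esub> inv\<^bsub>A\<^esub> f h1) \<otimes>\<^bsub>A\<^esub> (f h2 \<otimes>\<^bsub>A\<^esub> inv\<^bsub>A\<^esub> f h2)"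
      using a c by (simp only: \<rho>[OF h] A.m_ac A.inv_closed A.m_closed)
    then show "?\<Phi> (x \<otimes>\<^bsub>twisted_product H A \<sigma>\<^esub> y) = ?\<Phi> x \<otimes>\<^bsub>twisted_product H A \<rho>\<^esub> ?\<Phi> y"
      using eq a c by simp
  qed (use fc in auto)
  moreover have "bij_betw ?\<Phi> (carrier H \<times> carrier A) (carrier H \<times> carrier A)"
    by (rule bij_betwI[where g = ?\<Psi>]) (use fc in \<open>auto simp: A.m_assoc\<close>)
  ultimately show ?thesis unfolding is_iso_def iso_def by auto
qed

lemma twisted_product_aut_act_iso:
  assumes \<sigma>: "cocycle2 H A \<sigma>" and \<psi>H: "\<psi>H \<in> iso H H" and \<psi>A: "\<psi>A \<in> iso A A"
  shows "twisted_product H A (aut_act \<psi>H \<psi>A \<sigma>) \<cong> twisted_product H A \<sigma>"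
proof -
  have \<psi>H_hom: "\<psi>H \<in> hom H H" using \<psi>H by (simp add: iso_iff)
  let ?\<chi> = "inv_into (carrier A) \<psi>A"
  have \<chi>: "?\<chi> \<in> iso A A" using A.iso_set_sym[OF \<psi>A] .
  have \<chi>_hom: "?\<chi> \<in> hom A A" using \<chi> by (simp add: iso_iff)
  have \<psi>A_hom: "\<psi>A \<in> hom A A" using \<psi>A by (simp add: iso_iff)
  have \<chi>_\<psi>A: "?\<chi> (\<psi>A a) = a" if "a \<in> carrier A" for a
    using \<psi>A that by (simp add: iso_iff)
  let ?\<Phi> = "map_prod \<psi>H ?\<chi>"
  have "?\<Phi> \<in> hom (twisted_product H A (aut_act \<psi>H \<psi>A \<sigma>)) (twisted_product H A \<sigma>)"
  proof (rule homI)
    fix x y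
    assume "x \<in> carrier (twisted_product H A (aut_act \<psi>H \<psi>A \<sigma>))"
      "y \<in> carrier (twisted_product H A (aut_act \<psi>H \<psi>A \<sigma>))"
    then obtain h1 a1 h2 a2 where eq: "x = (h1, a1)" "y = (h2, a2)"
      and h: "h1 \<in> carrier H" "h2 \<in> carrier H" and a: "a1 \<in> carrier A" "a2 \<in> carrier A"
      by auto
    have "\<sigma> (\<psi>H h1) (\<psi>H h2) \<in> carrier A"
      using h \<psi>H_hom \<sigma> by (simp add: hom_in_carrier cocycle2_closed)
    with a h show "?\<Phi> (x \<otimes>\<^bsub>twisted_product H A (aut_act \<psi>H \<psi>A \<sigma>)\<^esub> y) = ?\<Phi> x \<otimes>\<^bsub>twisted_product H A \<sigma>\<^esub> ?\<Phi> y"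
      by (simp add: eq aut_act_def hom_mult[OF \<psi>H_hom] hom_mult[OF \<chi>_hom] \<chi>_\<psi>A
          hom_in_carrier[OF \<psi>A_hom])
  qed (use \<psi>H_hom \<chi>_hom in \<open>auto simp: hom_in_carrier\<close>)
  moreover have "bij_betw ?\<Phi> (carrier H \<times> carrier A) (carrier H \<times> carrier A)"
  proof -
    have "bij_betw \<psi>H (carrier H) (carrier H)" "bij_betw ?\<chi> (carrier A) (carrier A)"
      using \<psi>H \<chi> by (simp_all add: iso_def)
    then show ?thesis by (rule bij_betw_map_prod)
  qed
  ultimately show ?thesis unfolding is_iso_def iso_def by auto
qed

lemma group_center_twisted_product:
  assumes \<sigma>: "cocycle2 H A \<sigma>" and nd: "centrally_nondegenerate H \<sigma>"
  shows "group_center (twisted_product H A \<sigma>) = {\<one>\<^bsub>H\<^esub>} \<times> carrier A"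
proof
  let ?T = "twisted_product H A \<sigma>"
  note closed = cocycle2_closed[OF \<sigma>]
  show "group_center ?T \<subseteq> {\<one>\<^bsub>H\<^esub>} \<times> carrier A"
  proof
    fix x assume x: "x \<in> group_center ?T"
    then obtain g a where eq: "x = (g, a)" and g: "g \<in> carrier H" and a: "a \<in> carrier A"
      by (auto simp: group_center_def)
    have commute: "g \<otimes>\<^bsub>H\<^esub> h = h \<otimes>\<^bsub>H\<^esub> g \<and> \<sigma> g h = \<sigma> h g" if h: "h \<in> carrier H" for h
    proof -
      have "(g, a) \<otimes>\<^bsub>?T\<^esub> (h, \<one>\<^bsub>A\<^esub>) = (h, \<one>\<^bsub>A\<^esub>) \<otimes>\<^bsub>?T\<^esub> (g, a)"
        using x h eq by (auto simp: group_center_def)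
      then have "g \<otimes>\<^bsub>H\<^esub> h = h \<otimes>\<^bsub>H\<^esub> g" "\<sigma> g h \<otimes>\<^bsub>A\<^esub> a = \<sigma> h g \<otimes>\<^bsub>A\<^esub> a"
        using g h a closed by (simp_all add: A.m_comm)
      then show ?thesis using g h a closed by (simp add: A.r_cancel)
    qed
    then have "g \<in> group_center H" using g by (simp add: group_center_def)
    with nd commute have "g = \<one>\<^bsub>H\<^esub>" by (auto simp: centrally_nondegenerate_def)
    then show "x \<in> {\<one>\<^bsub>H\<^esub>} \<times> carrier A" using eq a by simp
  qed
  show "{\<one>\<^bsub>H\<^esub>} \<times> carrier A \<subseteq> group_center ?T"
  proof (clarsimp simp: group_center_def)
    fix a h b assume "a \<in> carrier A" "h \<in> carrier H" "b \<in> carrier A"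
    then show "\<sigma> \<one>\<^bsub>H\<^esub> h \<otimes>\<^bsub>A\<^esub> a \<otimes>\<^bsub>A\<^esub> b = \<sigma> h \<one>\<^bsub>H\<^esub> \<otimes>\<^bsub>A\<^esub> b \<otimes>\<^bsub>A\<^esub> a"
      using cocycle2_one_left[OF \<sigma>, of h] cocycle2_one_right[OF \<sigma>, of h] closed
      by (simp add: A.m_ac)
  qed
qed


lemma twisted_product_incl_hom:
  assumes \<sigma>: "cocycle2 H A \<sigma>"
  shows "twisted_product_incl H A \<sigma> \<in> hom A (twisted_product H A \<sigma>)"
proof (rule homI)
  let ?k = "\<sigma> \<one>\<^bsub>H\<^esub> \<one>\<^bsub>H\<^esub>"
  have k: "?k \<in> carrier A" by (simp add: \<sigma> cocycle2_closed)
  fix a b assume ab: "a \<in> carrier A" "b \<in> carrier A"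
  have "?k \<otimes>\<^bsub>A\<^esub> (a \<otimes>\<^bsub>A\<^esub> inv\<^bsub>A\<^esub> ?k) \<otimes>\<^bsub>A\<^esub> (b \<otimes>\<^bsub>A\<^esub> inv\<^bsub>A\<^esub> ?k)
      = (?k \<otimes>\<^bsub>A\<^esub> inv\<^bsub>A\<^esub> ?k) \<otimes>\<^bsub>A\<^esub> (a \<otimes>\<^bsub>A\<^esub> b \<otimes>\<^bsub>A\<^esub> inv\<^bsub>A\<^esub> ?k)"
    using ab k by (simp only: A.m_ac A.inv_closed A.m_closed)
  then show "twisted_product_incl H A \<sigma> (a \<otimes>\<^bsub>A\<^esub> b)
      = twisted_product_incl H A \<sigma> a \<otimes>\<^bsub>twisted_product H A \<sigma>\<^esub> twisted_product_incl H A \<sigma> b"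
    using ab k by (simp add: twisted_product_incl_def)
qed (simp add: twisted_product_incl_def \<sigma> cocycle2_closed)

lemma twisted_product_incl_image:
  assumes \<sigma>: "cocycle2 H A \<sigma>"
  shows "twisted_product_incl H A \<sigma> ` carrier A = {\<one>\<^bsub>H\<^esub>} \<times> carrier A"
proof -
  let ?k = "\<sigma> \<one>\<^bsub>H\<^esub> \<one>\<^bsub>H\<^esub>"
  have k: "?k \<in> carrier A" by (simp add: \<sigma> cocycle2_closed)
  have "(\<one>\<^bsub>H\<^esub>, a) = twisted_product_incl H A \<sigma> (a \<otimes>\<^bsub>A\<^esub> ?k)" if "a \<in> carrier A" for a
    using that k by (simp add: twisted_product_incl_def A.m_assoc)
  with k show ?thesis by (force simp: twisted_product_incl_def)
qed

lemma center_extension_twisted_product: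
  assumes \<sigma>: "cocycle2 H A \<sigma>" and nd: "centrally_nondegenerate H \<sigma>"
  shows "center_extension (twisted_product H A \<sigma>) A H (twisted_product_incl H A \<sigma>) fst"
proof -
  have "inj_on (twisted_product_incl H A \<sigma>) (carrier A)"
    using \<sigma> by (auto intro!: inj_onI simp: twisted_product_incl_def A.r_cancel cocycle2_closed)
  moreover have "fst \<in> hom (twisted_product H A \<sigma>) H" by (rule homI) auto
  moreover have "fst ` carrier (twisted_product H A \<sigma>) = carrier H" by force
  moreover have "kernel (twisted_product H A \<sigma>) H fst = {\<one>\<^bsub>H\<^esub>} \<times> carrier A"
    by (auto simp: kernel_def)
  ultimately show ?thesis
    unfolding center_extension_def using twisted_product_incl_hom[OF \<sigma>] twisted_product_incl_image[OF \<sigma>]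
      group_center_twisted_product[OF \<sigma> nd] by simp
qed

lemma extension_cocycle_twisted_product:
  assumes \<sigma>: "cocycle2 H A \<sigma>"
  shows "extension_cocycle (twisted_product H A \<sigma>) A H (twisted_product_incl H A \<sigma>) fst
    (\<lambda>h. (h, \<one>\<^bsub>A\<^esub>)) \<sigma>"
proof -
  let ?T = "twisted_product H A \<sigma>" and ?\<iota> = "twisted_product_incl H A \<sigma>"
  interpret T: group ?T by (rule group_twisted_product[OF \<sigma>])
  let ?k = "\<sigma> \<one>\<^bsub>H\<^esub> \<one>\<^bsub>H\<^esub>"
  have "?\<iota> (\<sigma> h1 h2) = inv\<^bsub>?T\<^esub> (h1 \<otimes>\<^bsub>H\<^esub> h2, \<one>\<^bsub>A\<^esub>) \<otimes>\<^bsub>?T\<^esub> (h1, \<one>\<^bsub>A\<^esub>) \<otimes>\<^bsub>?T\<^esub> (h2, \<one>\<^bsub>A\<^esub>)"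
    if h: "h1 \<in> carrier H" "h2 \<in> carrier H" for h1 h2
  proof -
    have c: "\<sigma> h1 h2 \<in> carrier A" "?k \<in> carrier A" using h \<sigma> by (simp_all add: cocycle2_closed)
    have "?k \<otimes>\<^bsub>A\<^esub> (\<sigma> h1 h2 \<otimes>\<^bsub>A\<^esub> inv\<^bsub>A\<^esub> ?k) = \<sigma> h1 h2"
      using c A.m_lcomm[of ?k "\<sigma> h1 h2" "inv\<^bsub>A\<^esub> ?k"] by simp
    then have "(h1, \<one>\<^bsub>A\<^esub>) \<otimes>\<^bsub>?T\<^esub> (h2, \<one>\<^bsub>A\<^esub>) = (h1 \<otimes>\<^bsub>H\<^esub> h2, \<one>\<^bsub>A\<^esub>) \<otimes>\<^bsub>?T\<^esub> ?\<iota> (\<sigma> h1 h2)"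
      using h c cocycle2_one_right[OF \<sigma>, of "h1 \<otimes>\<^bsub>H\<^esub> h2"] by (simp add: twisted_product_incl_def)
    moreover have T: "(h1, \<one>\<^bsub>A\<^esub>) \<in> carrier ?T" "(h2, \<one>\<^bsub>A\<^esub>) \<in> carrier ?T"
      "(h1 \<otimes>\<^bsub>H\<^esub> h2, \<one>\<^bsub>A\<^esub>) \<in> carrier ?T" "?\<iota> (\<sigma> h1 h2) \<in> carrier ?T"
      using h c by (simp_all add: twisted_product_incl_def)
    ultimately show ?thesis
      using T.inv_solve_left'[OF T(4,3) T.m_closed[OF T(1,2)]] T.m_assoc[OF T.inv_closed[OF T(3)] T(1,2)]
      by simp
  qed
  then show ?thesis by (simp add: extension_cocycle_def \<sigma> cocycle2_closed)
qed

lemma assoc_cocycle_twisted_product: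
  "cocycle2 H A \<sigma> \<Longrightarrow> centrally_nondegenerate H \<sigma> \<Longrightarrow> assoc_cocycle (twisted_product H A \<sigma>) A H \<sigma>"
  unfolding assoc_cocycle_def
  using center_extension_twisted_product extension_cocycle_twisted_product by blast

end

section \<open>Central extensions with kernel the centre\<close>

locale center_ext = G: group G + A: comm_group A + H: group H
  for G :: "('g, 'p) monoid_scheme" and A :: "('a, 'n) monoid_scheme" and H :: "('h, 'm) monoid_scheme" +
  fixes \<iota> :: "'a \<Rightarrow> 'g" and \<pi> :: "'g \<Rightarrow> 'h" and s :: "'h \<Rightarrow> 'g" and \<sigma> :: "'h \<Rightarrow> 'h \<Rightarrow> 'a"
  assumes center_extension: "center_extension G A H \<iota> \<pi>"
    and extension_cocycle: "extension_cocycle G A H \<iota> \<pi> s \<sigma>"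

sublocale center_ext \<subseteq> trivial_action_cohomology H A ..

sublocale center_ext \<subseteq> iota: group_hom A G \<iota>
  using center_extension by unfold_locales (simp add: center_extension_def)

sublocale center_ext \<subseteq> pi: group_hom G H \<pi>
  using center_extension by unfold_locales (simp add: center_extension_def)

lemma assoc_cocycle_imp_center_ext:
  "group G \<Longrightarrow> comm_group A \<Longrightarrow> group H \<Longrightarrow> assoc_cocycle G A H \<sigma> \<Longrightarrow>
   \<exists>\<iota> \<pi> s. center_ext G A H \<iota> \<pi> s \<sigma>"
  unfolding assoc_cocycle_def by (auto simp: center_ext_def center_ext_axioms_def)

context center_ext
begin

lemma iota_inj: "inj_on \<iota> (carrier A)"
  using center_extension by (simp add: center_extension_def)

lemma iota_image: "\<iota> ` carrier A = group_center G"
  using center_extension by (simp add: center_extension_def)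

lemma iota_central: "a \<in> carrier A \<Longrightarrow> g \<in> carrier G \<Longrightarrow> \<iota> a \<otimes>\<^bsub>G\<^esub> g = g \<otimes>\<^bsub>G\<^esub> \<iota> a"
  using iota_image by (auto simp: group_center_def)

lemma kernel_pi: "kernel G H \<pi> = \<iota> ` carrier A"
  using center_extension by (simp add: center_extension_def)

lemma pi_surj: "\<pi> ` carrier G = carrier H"
  using center_extension by (simp add: center_extension_def)

lemma pi_iota [simp]: "a \<in> carrier A \<Longrightarrow> \<pi> (\<iota> a) = \<one>\<^bsub>H\<^esub>"
  using kernel_pi by (auto simp: kernel_def)

lemma pi_eq_one_imp_iota:
  "g \<in> carrier G \<Longrightarrow> \<pi> g = \<one>\<^bsub>H\<^esub> \<Longrightarrow> \<exists>a \<in> carrier A. g = \<iota> a"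
  using kernel_pi by (auto simp: kernel_def)

lemma section_closed [simp]: "h \<in> carrier H \<Longrightarrow> s h \<in> carrier G"
  and pi_section [simp]: "h \<in> carrier H \<Longrightarrow> \<pi> (s h) = h"
  and cocycle_closed [simp]: "h1 \<in> carrier H \<Longrightarrow> h2 \<in> carrier H \<Longrightarrow> \<sigma> h1 h2 \<in> carrier A"
  using extension_cocycle by (simp_all add: extension_cocycle_def)

lemma iota_cocycle:
  "h1 \<in> carrier H \<Longrightarrow> h2 \<in> carrier H \<Longrightarrow>
   \<iota> (\<sigma> h1 h2) = inv\<^bsub>G\<^esub> s (h1 \<otimes>\<^bsub>H\<^esub> h2) \<otimes>\<^bsub>G\<^esub> s h1 \<otimes>\<^bsub>G\<^esub> s h2"
  using extension_cocycle by (simp add: extension_cocycle_def)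

lemma section_mult:
  assumes "h1 \<in> carrier H" "h2 \<in> carrier H"
  shows "s h1 \<otimes>\<^bsub>G\<^esub> s h2 = s (h1 \<otimes>\<^bsub>H\<^esub> h2) \<otimes>\<^bsub>G\<^esub> \<iota> (\<sigma> h1 h2)"
  using iota_cocycle[OF assms] assms by (simp add: G.m_assoc G.inv_solve_left)

lemma section_decomposition:
  assumes g: "g \<in> carrier G"
  obtains a where "a \<in> carrier A" "g = s (\<pi> g) \<otimes>\<^bsub>G\<^esub> \<iota> a"
proof -
  have "\<pi> (inv\<^bsub>G\<^esub> s (\<pi> g) \<otimes>\<^bsub>G\<^esub> g) = \<one>\<^bsub>H\<^esub>" using g by simp
  then obtain a where "a \<in> carrier A" "inv\<^bsub>G\<^esub> s (\<pi> g) \<otimes>\<^bsub>G\<^esub> g = \<iota> a"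
    using g pi_eq_one_imp_iota by (meson G.inv_closed G.m_closed pi.hom_closed section_closed)
  with g show thesis using that by (simp add: G.inv_solve_left')
qed

lemma cocycle2: "cocycle2 H A \<sigma>"
  unfolding cocycle2_def
proof (intro conjI ballI)
  fix h1 h2 h3 assume h: "h1 \<in> carrier H" "h2 \<in> carrier H" "h3 \<in> carrier H"
  have "(s h1 \<otimes>\<^bsub>G\<^esub> s h2) \<otimes>\<^bsub>G\<^esub> s h3 = s (h1 \<otimes>\<^bsub>H\<^esub> h2) \<otimes>\<^bsub>G\<^esub> (\<iota> (\<sigma> h1 h2) \<otimes>\<^bsub>G\<^esub> s h3)"
    using h by (simp add: section_mult G.m_assoc)
  also have "\<dots> = (s (h1 \<otimes>\<^bsub>H\<^esub> h2) \<otimes>\<^bsub>G\<^esub> s h3) \<otimes>\<^bsub>G\<^esub> \<iota> (\<sigma> h1 h2)"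
    using h iota_central[of "\<sigma> h1 h2" "s h3"] by (simp add: G.m_assoc)
  also have "\<dots> = s (h1 \<otimes>\<^bsub>H\<^esub> h2 \<otimes>\<^bsub>H\<^esub> h3) \<otimes>\<^bsub>G\<^esub> \<iota> (\<sigma> (h1 \<otimes>\<^bsub>H\<^esub> h2) h3 \<otimes>\<^bsub>A\<^esub> \<sigma> h1 h2)"
    using h by (simp add: section_mult G.m_assoc)
  finally have left: "(s h1 \<otimes>\<^bsub>G\<^esub> s h2) \<otimes>\<^bsub>G\<^esub> s h3
      = s (h1 \<otimes>\<^bsub>H\<^esub> h2 \<otimes>\<^bsub>H\<^esub> h3) \<otimes>\<^bsub>G\<^esub> \<iota> (\<sigma> (h1 \<otimes>\<^bsub>H\<^esub> h2) h3 \<otimes>\<^bsub>A\<^esub> \<sigma> h1 h2)" .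
  have "s h1 \<otimes>\<^bsub>G\<^esub> (s h2 \<otimes>\<^bsub>G\<^esub> s h3) = (s h1 \<otimes>\<^bsub>G\<^esub> s (h2 \<otimes>\<^bsub>H\<^esub> h3)) \<otimes>\<^bsub>G\<^esub> \<iota> (\<sigma> h2 h3)"
    using h by (simp add: section_mult[of h2 h3] G.m_assoc)
  also have "\<dots> = s (h1 \<otimes>\<^bsub>H\<^esub> h2 \<otimes>\<^bsub>H\<^esub> h3) \<otimes>\<^bsub>G\<^esub> \<iota> (\<sigma> h1 (h2 \<otimes>\<^bsub>H\<^esub> h3) \<otimes>\<^bsub>A\<^esub> \<sigma> h2 h3)"
    using h by (simp add: section_mult[of h1 "h2 \<otimes>\<^bsub>H\<^esub> h3"] G.m_assoc H.m_assoc)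
  finally have "s h1 \<otimes>\<^bsub>G\<^esub> (s h2 \<otimes>\<^bsub>G\<^esub> s h3)
      = s (h1 \<otimes>\<^bsub>H\<^esub> h2 \<otimes>\<^bsub>H\<^esub> h3) \<otimes>\<^bsub>G\<^esub> \<iota> (\<sigma> h1 (h2 \<otimes>\<^bsub>H\<^esub> h3) \<otimes>\<^bsub>A\<^esub> \<sigma> h2 h3)" .
  with left have "\<iota> (\<sigma> (h1 \<otimes>\<^bsub>H\<^esub> h2) h3 \<otimes>\<^bsub>A\<^esub> \<sigma> h1 h2) = \<iota> (\<sigma> h1 (h2 \<otimes>\<^bsub>H\<^esub> h3) \<otimes>\<^bsub>A\<^esub> \<sigma> h2 h3)"
    using h by (simp add: G.m_assoc)
  then have "\<sigma> (h1 \<otimes>\<^bsub>H\<^esub> h2) h3 \<otimes>\<^bsub>A\<^esub> \<sigma> h1 h2 = \<sigma> h1 (h2 \<otimes>\<^bsub>H\<^esub> h3) \<otimes>\<^bsub>A\<^esub> \<sigma> h2 h3"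
    by (rule inj_onD[OF iota_inj]) (use h in simp_all)
  then show "\<sigma> h1 h2 \<otimes>\<^bsub>A\<^esub> \<sigma> (h1 \<otimes>\<^bsub>H\<^esub> h2) h3 = \<sigma> h2 h3 \<otimes>\<^bsub>A\<^esub> \<sigma> h1 (h2 \<otimes>\<^bsub>H\<^esub> h3)"
    using h by (simp add: A.m_comm)
qed simp

lemma centrally_nondegenerate: "centrally_nondegenerate H \<sigma>"
  unfolding centrally_nondegenerate_def
proof (intro ballI impI)
  fix g assume g: "g \<in> group_center H" "g \<noteq> \<one>\<^bsub>H\<^esub>"
  then have gH: "g \<in> carrier H" by (simp add: group_center_def)
  have "s g \<notin> group_center G"
  proof
    assume "s g \<in> group_center G"
    then obtain a where "a \<in> carrier A" "s g = \<iota> a" using iota_image by blast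
    then show False using g gH pi_section[of g] by simp
  qed
  then obtain x where x: "x \<in> carrier G" "s g \<otimes>\<^bsub>G\<^esub> x \<noteq> x \<otimes>\<^bsub>G\<^esub> s g"
    using gH by (auto simp: group_center_def)
  obtain a where a: "a \<in> carrier A" "x = s (\<pi> x) \<otimes>\<^bsub>G\<^esub> \<iota> a"
    using section_decomposition[OF x(1)] by blast
  define h where "h = \<pi> x"
  have h: "h \<in> carrier H" using x by (simp add: h_def)
  have xh: "x = s h \<otimes>\<^bsub>G\<^esub> \<iota> a" using a by (simp add: h_def)
  \<comment> \<open>Since \<open>\<iota> a\<close> is central, \<open>s g\<close> commutes with \<open>x = s h \<iota> a\<close> iff it commutes with \<open>s h\<close>.\<close>
  have "s g \<otimes>\<^bsub>G\<^esub> s h \<noteq> s h \<otimes>\<^bsub>G\<^esub> s g"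
  proof
    assume eq: "s g \<otimes>\<^bsub>G\<^esub> s h = s h \<otimes>\<^bsub>G\<^esub> s g"
    have "s g \<otimes>\<^bsub>G\<^esub> x = (s g \<otimes>\<^bsub>G\<^esub> s h) \<otimes>\<^bsub>G\<^esub> \<iota> a"
      using a h gH by (simp add: xh G.m_assoc)
    also have "\<dots> = s h \<otimes>\<^bsub>G\<^esub> (\<iota> a \<otimes>\<^bsub>G\<^esub> s g)"
      using eq a h gH iota_central[of a "s g"] by (simp add: G.m_assoc)
    also have "\<dots> = x \<otimes>\<^bsub>G\<^esub> s g"
      using a h gH by (simp add: xh G.m_assoc)
    finally show False using x by simp
  qed
  moreover have "g \<otimes>\<^bsub>H\<^esub> h = h \<otimes>\<^bsub>H\<^esub> g" using g h by (simp add: group_center_def)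
  ultimately have "\<sigma> g h \<noteq> \<sigma> h g" using section_mult[of g h] section_mult[of h g] gH h by auto
  with h show "\<exists>h\<in>carrier H. \<sigma> g h \<noteq> \<sigma> h g" by blast
qed

lemma iota_left_commute:
  assumes "a \<in> carrier A" "g \<in> carrier G" "u \<in> carrier G"
  shows "\<iota> a \<otimes>\<^bsub>G\<^esub> (g \<otimes>\<^bsub>G\<^esub> u) = g \<otimes>\<^bsub>G\<^esub> (\<iota> a \<otimes>\<^bsub>G\<^esub> u)"
  using assms iota_central[of a g] by (simp flip: G.m_assoc)

lemma mult_central_factors:
  assumes "x \<in> carrier G" "y \<in> carrier G" "z \<in> carrier G"
    and "a \<in> carrier A" "b \<in> carrier A" "c \<in> carrier A"
  shows "inv\<^bsub>G\<^esub> (x \<otimes>\<^bsub>G\<^esub> \<iota> a) \<otimes>\<^bsub>G\<^esub> (y \<otimes>\<^bsub>G\<^esub> \<iota> b) \<otimes>\<^bsub>G\<^esub> (z \<otimes>\<^bsub>G\<^esub> \<iota> c)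
     = inv\<^bsub>G\<^esub> x \<otimes>\<^bsub>G\<^esub> y \<otimes>\<^bsub>G\<^esub> z \<otimes>\<^bsub>G\<^esub> \<iota> (inv\<^bsub>A\<^esub> a \<otimes>\<^bsub>A\<^esub> b \<otimes>\<^bsub>A\<^esub> c)"
proof -
  have "inv\<^bsub>G\<^esub> (x \<otimes>\<^bsub>G\<^esub> \<iota> a) \<otimes>\<^bsub>G\<^esub> (y \<otimes>\<^bsub>G\<^esub> \<iota> b) \<otimes>\<^bsub>G\<^esub> (z \<otimes>\<^bsub>G\<^esub> \<iota> c)
      = \<iota> (inv\<^bsub>A\<^esub> a) \<otimes>\<^bsub>G\<^esub> (inv\<^bsub>G\<^esub> x \<otimes>\<^bsub>G\<^esub> (y \<otimes>\<^bsub>G\<^esub> (\<iota> b \<otimes>\<^bsub>G\<^esub> (z \<otimes>\<^bsub>G\<^esub> \<iota> c))))"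
    using assms by (simp add: G.inv_mult_group G.m_assoc)
  also have "\<dots> = \<iota> (inv\<^bsub>A\<^esub> a) \<otimes>\<^bsub>G\<^esub> (inv\<^bsub>G\<^esub> x \<otimes>\<^bsub>G\<^esub> (y \<otimes>\<^bsub>G\<^esub> (z \<otimes>\<^bsub>G\<^esub> (\<iota> b \<otimes>\<^bsub>G\<^esub> \<iota> c))))"
    using assms by (simp add: iota_left_commute[of b z])
  also have "\<dots> = inv\<^bsub>G\<^esub> x \<otimes>\<^bsub>G\<^esub> (y \<otimes>\<^bsub>G\<^esub> (z \<otimes>\<^bsub>G\<^esub> (\<iota> (inv\<^bsub>A\<^esub> a) \<otimes>\<^bsub>G\<^esub> (\<iota> b \<otimes>\<^bsub>G\<^esub> \<iota> c))))"
    using assms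
    by (simp only: iota_left_commute[of "inv\<^bsub>A\<^esub> a"] A.inv_closed G.inv_closed G.m_closed iota.hom_closed)
  finally show ?thesis using assms by (simp add: G.m_assoc)
qed

lemma twisted_product_iso: "(\<lambda>(h, a). s h \<otimes>\<^bsub>G\<^esub> \<iota> a) \<in> iso (twisted_product H A \<sigma>) G"
proof (rule isoI)
  let ?\<Phi> = "\<lambda>(h, a). s h \<otimes>\<^bsub>G\<^esub> \<iota> a"
  show "?\<Phi> \<in> hom (twisted_product H A \<sigma>) G"
  proof (rule homI)
    fix x y assume "x \<in> carrier (twisted_product H A \<sigma>)" "y \<in> carrier (twisted_product H A \<sigma>)"
    then obtain h1 a1 h2 a2 where eq: "x = (h1, a1)" "y = (h2, a2)"
      and h: "h1 \<in> carrier H" "h2 \<in> carrier H" and a: "a1 \<in> carrier A" "a2 \<in> carrier A"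
      by auto
    have "s h1 \<otimes>\<^bsub>G\<^esub> \<iota> a1 \<otimes>\<^bsub>G\<^esub> (s h2 \<otimes>\<^bsub>G\<^esub> \<iota> a2) = s h1 \<otimes>\<^bsub>G\<^esub> (\<iota> a1 \<otimes>\<^bsub>G\<^esub> s h2) \<otimes>\<^bsub>G\<^esub> \<iota> a2"
      using h a by (simp add: G.m_assoc)
    also have "\<dots> = (s h1 \<otimes>\<^bsub>G\<^esub> s h2) \<otimes>\<^bsub>G\<^esub> (\<iota> a1 \<otimes>\<^bsub>G\<^esub> \<iota> a2)"
      using h a iota_central[of a1 "s h2"] by (simp add: G.m_assoc)
    also have "\<dots> = s (h1 \<otimes>\<^bsub>H\<^esub> h2) \<otimes>\<^bsub>G\<^esub> \<iota> (\<sigma> h1 h2 \<otimes>\<^bsub>A\<^esub> a1 \<otimes>\<^bsub>A\<^esub> a2)"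
      using h a by (simp add: section_mult G.m_assoc)
    finally show "?\<Phi> (x \<otimes>\<^bsub>twisted_product H A \<sigma>\<^esub> y) = ?\<Phi> x \<otimes>\<^bsub>G\<^esub> ?\<Phi> y" by (simp add: eq)
  qed auto
  show "bij_betw ?\<Phi> (carrier (twisted_product H A \<sigma>)) (carrier G)"
  proof (rule bij_betw_imageI)
    show "inj_on ?\<Phi> (carrier (twisted_product H A \<sigma>))"
    proof (rule inj_onI, clarsimp)
      fix h1 a1 h2 a2
      assume h: "h1 \<in> carrier H" "h2 \<in> carrier H" and a: "a1 \<in> carrier A" "a2 \<in> carrier A"
        and eq: "s h1 \<otimes>\<^bsub>G\<^esub> \<iota> a1 = s h2 \<otimes>\<^bsub>G\<^esub> \<iota> a2"
      have "h1 = h2" using arg_cong[OF eq, of \<pi>] h a by simp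
      with eq h a have "\<iota> a1 = \<iota> a2" by simp
      with a have "a1 = a2" by (simp add: inj_on_eq_iff[OF iota_inj])
      with \<open>h1 = h2\<close> show "h1 = h2 \<and> a1 = a2" by simp
    qed
    show "?\<Phi> ` carrier (twisted_product H A \<sigma>) = carrier G"
    proof
      show "carrier G \<subseteq> ?\<Phi> ` carrier (twisted_product H A \<sigma>)"
      proof
        fix g assume g: "g \<in> carrier G"
        then obtain a where "a \<in> carrier A" "g = ?\<Phi> (\<pi> g, a)" by (auto elim: section_decomposition)
        with g show "g \<in> ?\<Phi> ` carrier (twisted_product H A \<sigma>)" by force
      qed
    qed auto
  qed
qed

end

section \<open>Isomorphisms of central extensions\<close>

locale center_ext_iso =
  C: center_ext G A H \<iota> \<pi> s \<sigma> + C': center_ext G' A H \<iota>' \<pi>' s' \<sigma>'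
  for G :: "('g, 'p) monoid_scheme" and A :: "('a, 'n) monoid_scheme" and H :: "('h, 'm) monoid_scheme"
    and \<iota> \<pi> s \<sigma>
    and G' :: "('k, 'q) monoid_scheme" and \<iota>' \<pi>' s' \<sigma>' +
  fixes \<phi> :: "'k \<Rightarrow> 'g"
  assumes iso: "\<phi> \<in> iso G' G"

sublocale center_ext_iso \<subseteq> phi: group_hom G' G \<phi>
  using iso by unfold_locales (simp add: iso_iff)

context center_ext_iso
begin

lemma phi_surj: "\<phi> ` carrier G' = carrier G"
  using iso by (simp add: iso_iff)

lemma phi_inj: "inj_on \<phi> (carrier G')"
  using iso by (simp add: iso_iff)

lemma phi_iota'_bij: "bij_betw (\<phi> \<circ> \<iota>') (carrier A) (group_center G)"
proof -
  have "bij_betw \<iota>' (carrier A) (group_center G')"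
    using C'.iota_inj C'.iota_image by (simp add: bij_betw_def)
  moreover have "bij_betw \<phi> (group_center G') (group_center G)"
    using iso_image_group_center[OF C'.G.is_group iso] group_center_subset[of G']
    by (auto simp: bij_betw_def intro: inj_on_subset[OF phi_inj])
  ultimately show ?thesis by (rule bij_betw_trans)
qed

lemma phi_iota' [simp]: "a \<in> carrier A \<Longrightarrow> \<pi> (\<phi> (\<iota>' a)) = \<one>\<^bsub>H\<^esub>"
  using phi_iota'_bij C.iota_image by (force simp: bij_betw_def)

definition kernel_aut :: "'a \<Rightarrow> 'a" where
  "kernel_aut = inv_into (carrier A) (\<phi> \<circ> \<iota>') \<circ> \<iota>"

lemma phi_iota'_kernel_aut [simp]:
  assumes "a \<in> carrier A"
  shows "\<phi> (\<iota>' (kernel_aut a)) = \<iota> a"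
proof -
  have "\<iota> a \<in> (\<phi> \<circ> \<iota>') ` carrier A"
    using phi_iota'_bij C.iota_image assms unfolding bij_betw_def by blast
  from f_inv_into_f[OF this] show ?thesis by (simp add: kernel_aut_def)
qed

lemma kernel_aut_iso: "kernel_aut \<in> iso A A"
proof (rule isoI)
  have "bij_betw \<iota> (carrier A) (group_center G)"
    using C.iota_inj C.iota_image by (simp add: bij_betw_def)
  then show bij: "bij_betw kernel_aut (carrier A) (carrier A)"
    unfolding kernel_aut_def using bij_betw_inv_into[OF phi_iota'_bij] by (rule bij_betw_trans)
  show "kernel_aut \<in> hom A A"
  proof (rule homI)
    show closed: "kernel_aut a \<in> carrier A" if "a \<in> carrier A" for a
      using bij that by (auto simp: bij_betw_def)
    fix a b assume ab: "a \<in> carrier A" "b \<in> carrier A"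
    have "\<phi> (\<iota>' (kernel_aut (a \<otimes>\<^bsub>A\<^esub> b))) = \<phi> (\<iota>' (kernel_aut a \<otimes>\<^bsub>A\<^esub> kernel_aut b))"
      using ab closed by simp
    moreover have "inj_on (\<phi> \<circ> \<iota>') (carrier A)" using phi_iota'_bij by (simp add: bij_betw_def)
    ultimately show "kernel_aut (a \<otimes>\<^bsub>A\<^esub> b) = kernel_aut a \<otimes>\<^bsub>A\<^esub> kernel_aut b"
      using ab closed by (auto simp: inj_on_def)
  qed
qed

definition quotient_aut :: "'h \<Rightarrow> 'h" where
  "quotient_aut k = \<pi> (\<phi> (s' k))"

lemma pi_phi:
  assumes g: "g \<in> carrier G'"
  shows "\<pi> (\<phi> g) = quotient_aut (\<pi>' g)"
proof -
  define k where "k = \<pi>' g"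
  obtain a where "a \<in> carrier A" and "g = s' k \<otimes>\<^bsub>G'\<^esub> \<iota>' a"
    using C'.section_decomposition[OF g] by (auto simp: k_def)
  moreover have "k \<in> carrier H" using g by (simp add: k_def)
  ultimately show ?thesis by (simp add: quotient_aut_def flip: k_def)
qed

lemma quotient_aut_iso: "quotient_aut \<in> iso H H"
proof -
  have "quotient_aut \<in> hom H H"
  proof (rule homI)
    fix k1 k2 assume k: "k1 \<in> carrier H" "k2 \<in> carrier H"
    then show "quotient_aut (k1 \<otimes>\<^bsub>H\<^esub> k2) = quotient_aut k1 \<otimes>\<^bsub>H\<^esub> quotient_aut k2"
      using pi_phi[of "s' k1 \<otimes>\<^bsub>G'\<^esub> s' k2"] by (simp add: quotient_aut_def)
  qed (simp add: quotient_aut_def)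
  then interpret group_hom H H quotient_aut
    by unfold_locales
  show ?thesis
    unfolding iso_iff
  proof
    show "carrier H \<subseteq> quotient_aut ` carrier H"
    proof
      fix h assume "h \<in> carrier H"
      then obtain x where x: "x \<in> carrier G" "h = \<pi> x"
        unfolding C.pi_surj[symmetric] by blast
      moreover obtain g where "g \<in> carrier G'" "x = \<phi> g"
        using x(1) unfolding phi_surj[symmetric] by blast
      ultimately show "h \<in> quotient_aut ` carrier H" by (simp add: pi_phi)
    qed
    show "\<forall>k \<in> carrier H. quotient_aut k = \<one>\<^bsub>H\<^esub> \<longrightarrow> k = \<one>\<^bsub>H\<^esub>"
    proof (intro ballI impI)
      fix k assume k: "k \<in> carrier H" and "quotient_aut k = \<one>\<^bsub>H\<^esub>"
      then have "\<phi> (s' k) \<in> group_center G"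
        using C.kernel_pi C.iota_image k by (auto simp: quotient_aut_def kernel_def)
      then have "s' k \<in> group_center G'"
        using iso_group_center_iff[OF C'.G.is_group iso] k by simp
      then obtain a where "a \<in> carrier A" "s' k = \<iota>' a" using C'.iota_image by auto
      then show "k = \<one>\<^bsub>H\<^esub>" using C'.pi_section[OF k] by simp
    qed
  qed
qed

lemma phi_section:
  assumes k: "k \<in> carrier H"
  shows "\<exists>a \<in> carrier A. \<phi> (s' k) = s (quotient_aut k) \<otimes>\<^bsub>G\<^esub> \<iota> a"
proof -
  obtain a where "a \<in> carrier A" "\<phi> (s' k) = s (\<pi> (\<phi> (s' k))) \<otimes>\<^bsub>G\<^esub> \<iota> a"
    using C.section_decomposition[of "\<phi> (s' k)"] k by auto
  then show ?thesis by (auto simp: quotient_aut_def)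
qed

lemma cohomologous_aut_act: "cohomologous H A (aut_act quotient_aut kernel_aut \<sigma>) \<sigma>'"
proof -
  let ?\<psi> = quotient_aut and ?\<chi> = kernel_aut
  interpret \<chi>: group_hom A A kernel_aut
    using kernel_aut_iso by unfold_locales (simp add: iso_iff)
  have \<psi>_closed: "?\<psi> k \<in> carrier H" if "k \<in> carrier H" for k
    using that by (simp add: quotient_aut_def)
  \<comment> \<open>\<open>\<phi> \<circ> s'\<close> and \<open>s \<circ> quotient_aut\<close> differ by the cochain \<open>c\<close>, whose coboundary relates the cocycles.\<close>
  obtain c where c: "\<forall>k \<in> carrier H. c k \<in> carrier A \<and> \<phi> (s' k) = s (?\<psi> k) \<otimes>\<^bsub>G\<^esub> \<iota> (c k)"
    using phi_section by (metis bchoice)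
  have "\<sigma>' k1 k2 = ?\<chi> (\<sigma> (?\<psi> k1) (?\<psi> k2)) \<otimes>\<^bsub>A\<^esub> inv\<^bsub>A\<^esub> ?\<chi> (c (k1 \<otimes>\<^bsub>H\<^esub> k2))
      \<otimes>\<^bsub>A\<^esub> ?\<chi> (c k1) \<otimes>\<^bsub>A\<^esub> ?\<chi> (c k2)"
    if k: "k1 \<in> carrier H" "k2 \<in> carrier H" for k1 k2
  proof -
    let ?x = "\<sigma> (?\<psi> k1) (?\<psi> k2) \<otimes>\<^bsub>A\<^esub> inv\<^bsub>A\<^esub> c (k1 \<otimes>\<^bsub>H\<^esub> k2) \<otimes>\<^bsub>A\<^esub> c k1 \<otimes>\<^bsub>A\<^esub> c k2"
    have k12: "k1 \<otimes>\<^bsub>H\<^esub> k2 \<in> carrier H" using k by simp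
    have \<psi>_mult: "?\<psi> (k1 \<otimes>\<^bsub>H\<^esub> k2) = ?\<psi> k1 \<otimes>\<^bsub>H\<^esub> ?\<psi> k2"
      using k quotient_aut_iso by (simp add: iso_iff hom_mult)
    have "\<phi> (\<iota>' (\<sigma>' k1 k2)) = inv\<^bsub>G\<^esub> \<phi> (s' (k1 \<otimes>\<^bsub>H\<^esub> k2)) \<otimes>\<^bsub>G\<^esub> \<phi> (s' k1) \<otimes>\<^bsub>G\<^esub> \<phi> (s' k2)"
      using k by (simp add: C'.iota_cocycle)
    also have "\<dots> = inv\<^bsub>G\<^esub> (s (?\<psi> (k1 \<otimes>\<^bsub>H\<^esub> k2)) \<otimes>\<^bsub>G\<^esub> \<iota> (c (k1 \<otimes>\<^bsub>H\<^esub> k2)))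
        \<otimes>\<^bsub>G\<^esub> (s (?\<psi> k1) \<otimes>\<^bsub>G\<^esub> \<iota> (c k1)) \<otimes>\<^bsub>G\<^esub> (s (?\<psi> k2) \<otimes>\<^bsub>G\<^esub> \<iota> (c k2))"
      using c k k12 by simp
    also have "\<dots> = \<iota> (\<sigma> (?\<psi> k1) (?\<psi> k2)) \<otimes>\<^bsub>G\<^esub> \<iota> (inv\<^bsub>A\<^esub> c (k1 \<otimes>\<^bsub>H\<^esub> k2) \<otimes>\<^bsub>A\<^esub> c k1 \<otimes>\<^bsub>A\<^esub> c k2)"
      using c k k12 \<psi>_closed C.mult_central_factors by (simp add: C.iota_cocycle \<psi>_mult)
    also have "\<dots> = \<phi> (\<iota>' (?\<chi> ?x))"
      using c k k12 \<psi>_closed by (simp add: C.A.m_assoc)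
    finally have "\<phi> (\<iota>' (\<sigma>' k1 k2)) = \<phi> (\<iota>' (?\<chi> ?x))" .
    then have "\<sigma>' k1 k2 = ?\<chi> ?x"
      using phi_iota'_bij c k k12 \<psi>_closed by (auto simp: bij_betw_def inj_on_def)
    then show ?thesis using c k k12 \<psi>_closed by simp
  qed
  moreover have "(\<lambda>k. ?\<chi> (c k)) \<in> carrier H \<rightarrow> carrier A" using c by simp
  ultimately show ?thesis unfolding cohomologous_def aut_act_def by blast
qed

end

lemma (in normal) kernel_iso_Mod:
  assumes K: "group K" and \<beta>: "\<beta> \<in> iso (G Mod H) K"
  shows "kernel G K (\<lambda>g. \<beta> (H #> g)) = H"
proof -
  have ker_\<beta>: "kernel (G Mod H) K \<beta> = {H}"
    using \<beta> iso_kernel_image[OF factorgroup_is_group K] by simp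
  have "\<beta> (H #> g) = \<one>\<^bsub>K\<^esub> \<longleftrightarrow> g \<in> H" if g: "g \<in> carrier G" for g
  proof -
    have "H #> g \<in> carrier (G Mod H)" using g by (auto simp: FactGroup_def RCOSETS_def)
    then have "\<beta> (H #> g) = \<one>\<^bsub>K\<^esub> \<longleftrightarrow> H #> g = H"
      using ker_\<beta> by (auto simp: kernel_def)
    also have "\<dots> \<longleftrightarrow> g \<in> H"
      using g coset_join1 coset_join2 subgroup_axioms by blast
    finally show ?thesis .
  qed
  then show ?thesis using subset by (auto simp: kernel_def)
qed

lemma center_extension_of_isos:
  assumes G: "group G" and H: "group H"
    and \<alpha>: "\<alpha> \<in> iso A (G\<lparr>carrier := group_center G\<rparr>)" and \<beta>: "\<beta> \<in> iso (G Mod group_center G) H"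
  shows "center_extension G A H \<alpha> (\<lambda>g. \<beta> (group_center G #>\<^bsub>G\<^esub> g))"
proof -
  interpret normal "group_center G" G by (rule group.group_center_normal[OF G])
  have "(\<lambda>g. \<beta> (group_center G #>\<^bsub>G\<^esub> g)) \<in> hom G H"
    by (rule hom_eq[OF hom_compose[OF r_coset_hom_Mod iso_imp_homomorphism[OF \<beta>]]])
      (simp add: compose_def)
  moreover have "(\<lambda>g. \<beta> (group_center G #>\<^bsub>G\<^esub> g)) ` carrier G = carrier H"
  proof -
    have "carrier (G Mod group_center G) = (\<lambda>g. group_center G #>\<^bsub>G\<^esub> g) ` carrier G"
      by (auto simp: FactGroup_def RCOSETS_def)
    then show ?thesis using \<beta> by (simp add: iso_iff image_image)
  qed
  moreover have "\<alpha> \<in> hom A G"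
    using \<alpha> group_center_subset[of G] by (auto simp: iso_iff hom_def)
  ultimately show ?thesis
    using \<alpha> kernel_iso_Mod[OF H \<beta>] by (simp add: center_extension_def iso_iff)
qed

lemma extension_cocycle_exists:
  assumes G: "group G" and H: "group H" and ext: "center_extension G A H \<iota> \<pi>"
  shows "\<exists>s \<sigma>. extension_cocycle G A H \<iota> \<pi> s \<sigma>"
proof -
  interpret G: group G by (rule G)
  interpret H: group H by (rule H)
  interpret \<pi>: group_hom G H \<pi>
    using ext by unfold_locales (simp add: center_extension_def)
  define s where "s = inv_into (carrier G) \<pi>"
  have s: "s h \<in> carrier G" "\<pi> (s h) = h" if "h \<in> carrier H" for h
    using ext that by (simp_all add: s_def center_extension_def inv_into_into f_inv_into_f)
  define \<sigma> where "\<sigma> h1 h2 = inv_into (carrier A) \<iota> (inv\<^bsub>G\<^esub> (s (h1 \<otimes>\<^bsub>H\<^esub> h2)) \<otimes>\<^bsub>G\<^esub> s h1 \<otimes>\<^bsub>G\<^esub> s h2)"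
    for h1 h2
  have "inv\<^bsub>G\<^esub> (s (h1 \<otimes>\<^bsub>H\<^esub> h2)) \<otimes>\<^bsub>G\<^esub> s h1 \<otimes>\<^bsub>G\<^esub> s h2 \<in> \<iota> ` carrier A"
    if h: "h1 \<in> carrier H" "h2 \<in> carrier H" for h1 h2
  proof -
    have "\<pi> (inv\<^bsub>G\<^esub> (s (h1 \<otimes>\<^bsub>H\<^esub> h2)) \<otimes>\<^bsub>G\<^esub> s h1 \<otimes>\<^bsub>G\<^esub> s h2) = \<one>\<^bsub>H\<^esub>"
      using h s by (simp add: H.inv_mult_group H.m_assoc)
    then have "inv\<^bsub>G\<^esub> (s (h1 \<otimes>\<^bsub>H\<^esub> h2)) \<otimes>\<^bsub>G\<^esub> s h1 \<otimes>\<^bsub>G\<^esub> s h2 \<in> kernel G H \<pi>"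
      using h s by (simp add: kernel_def)
    then show ?thesis
      using ext by (simp add: center_extension_def)
  qed
  then have "extension_cocycle G A H \<iota> \<pi> s \<sigma>"
    by (simp add: extension_cocycle_def s \<sigma>_def inv_into_into f_inv_into_f)
  then show ?thesis by blast
qed

lemma (in center_ext_iso) cocycles_same_orbit: "same_orbit H A \<sigma> \<sigma>'"
proof -
  have "cocycle2 H A (aut_act quotient_aut kernel_aut \<sigma>)"
    using C.cocycle2 quotient_aut_iso kernel_aut_iso by (simp add: C.cocycle2_aut_act iso_iff)
  then have "coh_class H A (aut_act quotient_aut kernel_aut \<sigma>) = coh_class H A \<sigma>'"
    using C'.cocycle2 cohomologous_aut_act by (rule C.coh_class_eq)
  then show ?thesis
    unfolding same_orbit_def using quotient_aut_iso kernel_aut_iso by blast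
qed

lemma (in center_ext) iso_twisted_product_if_same_orbit:
  assumes "same_orbit H A \<sigma> \<rho>" and \<rho>: "cocycle2 H A \<rho>"
  shows "G \<cong> twisted_product H A \<rho>"
proof -
  obtain \<psi>H \<psi>A where \<psi>H: "\<psi>H \<in> iso H H" and \<psi>A: "\<psi>A \<in> iso A A"
    and eq: "coh_class H A (aut_act \<psi>H \<psi>A \<sigma>) = coh_class H A \<rho>"
    using assms(1) unfolding same_orbit_def by blast
  let ?\<tau> = "aut_act \<psi>H \<psi>A \<sigma>"
  have \<tau>: "cocycle2 H A ?\<tau>"
    using cocycle2 \<psi>H \<psi>A by (simp add: cocycle2_aut_act iso_iff)
  have "\<rho> \<in> coh_class H A ?\<tau>"
    using \<rho> unfolding eq by (simp add: coh_class_def cohomologous_refl)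
  then have "cohomologous H A ?\<tau> \<rho>" by (simp add: coh_class_def)
  have "G \<cong> twisted_product H A \<sigma>"
    using group_twisted_product[OF cocycle2] is_isoI[OF twisted_product_iso] by (rule group.iso_sym)
  also have "\<dots> \<cong> twisted_product H A ?\<tau>"
    using group_twisted_product[OF \<tau>] twisted_product_aut_act_iso[OF cocycle2 \<psi>H \<psi>A]
    by (rule group.iso_sym)
  also have "\<dots> \<cong> twisted_product H A \<rho>"
    using \<tau> \<open>cohomologous H A ?\<tau> \<rho>\<close> by (rule twisted_product_iso_if_cohomologous)
  finally show ?thesis .
qed

lemma iso_iff_same_orbit:
  assumes C1: "center_ext G1 A H \<iota>1 \<pi>1 s1 \<sigma>1" and C2: "center_ext G2 A H \<iota>2 \<pi>2 s2 \<sigma>2"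
  shows "G1 \<cong> G2 \<longleftrightarrow> same_orbit H A \<sigma>1 \<sigma>2"
proof
  interpret C1: center_ext G1 A H \<iota>1 \<pi>1 s1 \<sigma>1 by (rule C1)
  assume "G1 \<cong> G2"
  then obtain \<phi> where "\<phi> \<in> iso G2 G1"
    unfolding is_iso_def using C1.G.iso_set_sym by blast
  with C1 C2 interpret center_ext_iso G1 A H \<iota>1 \<pi>1 s1 \<sigma>1 G2 \<iota>2 \<pi>2 s2 \<sigma>2 \<phi>
    by (simp add: center_ext_iso_def center_ext_iso_axioms_def)
  show "same_orbit H A \<sigma>1 \<sigma>2" by (rule cocycles_same_orbit)
next
  interpret C1: center_ext G1 A H \<iota>1 \<pi>1 s1 \<sigma>1 by (rule C1)
  interpret C2: center_ext G2 A H \<iota>2 \<pi>2 s2 \<sigma>2 by (rule C2)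
  assume "same_orbit H A \<sigma>1 \<sigma>2"
  then have "G1 \<cong> twisted_product H A \<sigma>2"
    using C2.cocycle2 by (rule C1.iso_twisted_product_if_same_orbit)
  also have "\<dots> \<cong> G2"
    using C2.twisted_product_iso by (rule is_isoI)
  finally show "G1 \<cong> G2" .
qed

theorem theorem2p8:
  fixes H :: "'h monoid" and A :: "'a monoid"
  assumes "group H" and "comm_group A"
  shows
    \<comment> \<open>(0) every group G with Z(G) ~ A and G/Z(G) ~ H carries an extension cocycle\<close>
    "(\<forall>G :: 'g monoid. group G \<and> A \<cong> G\<lparr>carrier := group_center G\<rparr> \<and> (G Mod group_center G) \<cong> H
        \<longrightarrow> (\<exists>\<sigma>. assoc_cocycle G A H \<sigma>))
   \<and> \<comment> \<open>(1) such cocycles are centrally non-degenerate 2-cocycles\<close>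
     (\<forall>(G :: 'g monoid) \<sigma>. group G \<and> assoc_cocycle G A H \<sigma>
        \<longrightarrow> cocycle2 H A \<sigma> \<and> centrally_nondegenerate H \<sigma>)
   \<and> \<comment> \<open>(2) well-defined and injective on isomorphism classes\<close>
     (\<forall>(G1 :: 'g monoid) (G2 :: 'k monoid) \<sigma>1 \<sigma>2.
        group G1 \<and> group G2 \<and> assoc_cocycle G1 A H \<sigma>1 \<and> assoc_cocycle G2 A H \<sigma>2
        \<longrightarrow> (G1 \<cong> G2 \<longleftrightarrow> same_orbit H A \<sigma>1 \<sigma>2))
   \<and> \<comment> \<open>(3) surjective onto orbits of classes of centrally non-degenerate cocycles\<close>
     (\<forall>\<rho>. cocycle2 H A \<rho> \<and> centrally_nondegenerate H \<rho>
        \<longrightarrow> (\<exists>(G :: ('h \<times> 'a) monoid) \<sigma>. group G \<and> assoc_cocycle G A H \<sigma> \<and> same_orbit H A \<sigma> \<rho>))"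
proof -
  interpret trivial_action_cohomology H A by (rule trivial_action_cohomology.intro[OF assms])
  have "\<exists>\<sigma>. assoc_cocycle G A H \<sigma>"
    if "group G" "A \<cong> G\<lparr>carrier := group_center G\<rparr>" "G Mod group_center G \<cong> H" for G :: "'g monoid"
    using that center_extension_of_isos extension_cocycle_exists assms(1)
    unfolding assoc_cocycle_def is_iso_def by blast
  moreover have "cocycle2 H A \<sigma> \<and> centrally_nondegenerate H \<sigma>"
    if "group G" "assoc_cocycle G A H \<sigma>" for G :: "'g monoid" and \<sigma>
    using that assoc_cocycle_imp_center_ext assms center_ext.cocycle2 center_ext.centrally_nondegenerate by metis
  moreover have "G1 \<cong> G2 \<longleftrightarrow> same_orbit H A \<sigma>1 \<sigma>2"
    if "group G1" "group G2" "assoc_cocycle G1 A H \<sigma>1" "assoc_cocycle G2 A H \<sigma>2"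
    for G1 :: "'g monoid" and G2 :: "'k monoid" and \<sigma>1 \<sigma>2
    using that assoc_cocycle_imp_center_ext[of G1] assoc_cocycle_imp_center_ext[of G2] assms iso_iff_same_orbit by metis
  moreover have "\<exists>(G :: ('h \<times> 'a) monoid) \<sigma>. group G \<and> assoc_cocycle G A H \<sigma> \<and> same_orbit H A \<sigma> \<rho>"
    if "cocycle2 H A \<rho>" "centrally_nondegenerate H \<rho>" for \<rho>
    using that group_twisted_product assoc_cocycle_twisted_product same_orbit_refl by blast
  ultimately show ?thesis by blast
qed

end
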